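(* Let $A,B,C$ be dendrons. If $AB=AC$, then $B=C$.
   Context: A finite dynamical system (FDS) is a function $A:S_A\to S_A$ on a finite set, considered up to isomorphism of functional graphs (arcs $x\to A(x)$). The product $AB$ acts on $S_A\times S_B$ by $(a,b)\mapsto(A(a),B(b))$. A dendron is an FDS whose functional graph is connected and which has a fixpoint (a state $s$ with $A(s)=s$). *)

theory Defs
  imports Main
begin

text \<open>A finite dynamical system (FDS) is represented by a finite carrier set S
  and a function f mapping S into S (values of f outside S are irrelevant).\<close>

definition fds :: "'a set \<Rightarrow> ('a \<Rightarrow> 'a) \<Rightarrow> bool" where
  "fds S f \<longleftrightarrow> finite S \<and> (\<forall>x\<in>S. f x \<in> S)"

definition fds_arcs :: "'a set \<Rightarrow> ('a \<Rightarrow> 'a) \<Rightarrow> ('a \<times> 'a) set" where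
  "fds_arcs S f = {(x, f x) | x. x \<in> S}"

definition fds_connected :: "'a set \<Rightarrow> ('a \<Rightarrow> 'a) \<Rightarrow> bool" where
  "fds_connected S f \<longleftrightarrow>
     (\<forall>x\<in>S. \<forall>y\<in>S. (x, y) \<in> (fds_arcs S f \<union> (fds_arcs S f)\<inverse>)\<^sup>*)"

definition dendron :: "'a set \<Rightarrow> ('a \<Rightarrow> 'a) \<Rightarrow> bool" where
  "dendron S f \<longleftrightarrow> fds S f \<and> fds_connected S f \<and> (\<exists>s\<in>S. f s = s)"

definition fds_iso :: "'a set \<Rightarrow> ('a \<Rightarrow> 'a) \<Rightarrow> 'b set \<Rightarrow> ('b \<Rightarrow> 'b) \<Rightarrow> bool" where
  "fds_iso S f T g \<longleftrightarrow> (\<exists>h. bij_betw h S T \<and> (\<forall>x\<in>S. h (f x) = g (h x)))"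

definition fds_prod_set :: "'a set \<Rightarrow> 'b set \<Rightarrow> ('a \<times> 'b) set" where
  "fds_prod_set S T = S \<times> T"

definition fds_prod :: "('a \<Rightarrow> 'a) \<Rightarrow> ('b \<Rightarrow> 'b) \<Rightarrow> ('a \<times> 'b \<Rightarrow> 'a \<times> 'b)" where
  "fds_prod f g = map_prod f g"

end

theory Submission
  imports Defs "HOL-Library.FuncSet"
begin

text \<open>Lovasz's counting argument. Let hom(X, Y) be the number of homomorphisms X \<rightarrow> Y.
  Then hom(X, AB) = hom(X, A) hom(X, B), and hom(X, A) > 0 for every X because A has a
  fixpoint, so AB \<cong> AC gives hom(X, B) = hom(X, C) for every X. A homomorphism factors
  uniquely through the quotient by its kernel, followed by an injective homomorphism, and
  proper quotients of X are smaller than X; by induction on |X| the numbers of injective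
  homomorphisms X \<rightarrow> B and X \<rightarrow> C agree too. For X = B and X = C the identities then give
  injective homomorphisms B \<rightarrow> C and C \<rightarrow> B, hence an isomorphism.\<close>

definition fds_hom :: "'a set \<Rightarrow> ('a \<Rightarrow> 'a) \<Rightarrow> 'b set \<Rightarrow> ('b \<Rightarrow> 'b) \<Rightarrow> ('a \<Rightarrow> 'b) set" where
  "fds_hom S f T g = {h \<in> S \<rightarrow>\<^sub>E T. \<forall>x\<in>S. h (f x) = g (h x)}"

definition fds_inj_hom :: "'a set \<Rightarrow> ('a \<Rightarrow> 'a) \<Rightarrow> 'b set \<Rightarrow> ('b \<Rightarrow> 'b) \<Rightarrow> ('a \<Rightarrow> 'b) set" where
  "fds_inj_hom S f T g = {h \<in> fds_hom S f T g. inj_on h S}"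

definition kernel_on :: "'a set \<Rightarrow> ('a \<Rightarrow> 'b) \<Rightarrow> ('a \<times> 'a) set" where
  "kernel_on S h = {(x, y). x \<in> S \<and> y \<in> S \<and> h x = h y}"

definition fds_congruences :: "'a set \<Rightarrow> ('a \<Rightarrow> 'a) \<Rightarrow> ('a \<times> 'a) set set" where
  "fds_congruences S f = {E. equiv S E \<and> (\<forall>x y. (x, y) \<in> E \<longrightarrow> (f x, f y) \<in> E)}"

text \<open>The quotient of S by a congruence E is realised on a set of class representatives
  inside S rather than on S // E, so that it has the same type as S; the induction on the
  size of the source below relies on this.\<close>

definition class_rep :: "('a \<times> 'a) set \<Rightarrow> 'a \<Rightarrow> 'a" where
  "class_rep E x = (SOME y. y \<in> E `` {x})"

lemma finite_fds_hom: "finite S \<Longrightarrow> finite T \<Longrightarrow> finite (fds_hom S f T g)"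
  unfolding fds_hom_def by (rule finite_subset[of _ "S \<rightarrow>\<^sub>E T"]) (auto intro: finite_PiE)

lemma finite_fds_inj_hom: "finite S \<Longrightarrow> finite T \<Longrightarrow> finite (fds_inj_hom S f T g)"
  unfolding fds_inj_hom_def by (simp add: finite_fds_hom)

lemma finite_fds_congruences: "finite S \<Longrightarrow> finite (fds_congruences S f)"
  unfolding fds_congruences_def
  by (rule finite_subset[of _ "Pow (S \<times> S)"]) (auto dest: equiv_type)

lemma Id_on_in_fds_congruences: "fds S f \<Longrightarrow> Id_on S \<in> fds_congruences S f"
  unfolding fds_congruences_def fds_def equiv_def refl_on_def sym_def trans_def by auto

lemma fds_fds_prod: "fds S f \<Longrightarrow> fds T g \<Longrightarrow> fds (fds_prod_set S T) (fds_prod f g)"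
  unfolding fds_def fds_prod_set_def fds_prod_def by auto

lemma class_rep_related:
  assumes "equiv S E" "x \<in> S"
  shows "(x, class_rep E x) \<in> E"
proof -
  have "x \<in> E `` {x}" using assms by (meson Image_singleton_iff equiv_def refl_onD)
  then show ?thesis unfolding class_rep_def by (metis Image_singleton_iff someI)
qed

lemma class_rep_cong: "equiv S E \<Longrightarrow> (x, y) \<in> E \<Longrightarrow> class_rep E x = class_rep E y"
  unfolding class_rep_def by (simp add: equiv_class_eq)

lemma class_rep_eq_iff:
  assumes "equiv S E" "x \<in> S" "y \<in> S"
  shows "class_rep E x = class_rep E y \<longleftrightarrow> (x, y) \<in> E"
proof
  have "sym E" "trans E" using assms(1) by (simp_all add: equiv_def)
  assume "class_rep E x = class_rep E y"
  with class_rep_related[OF assms(1,3)] \<open>sym E\<close> have "(class_rep E x, y) \<in> E"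
    by (simp add: symD)
  then show "(x, y) \<in> E"
    by (rule transD[OF \<open>trans E\<close> class_rep_related[OF assms(1,2)]])
qed (rule class_rep_cong[OF assms(1)])

lemma class_rep_in: "equiv S E \<Longrightarrow> x \<in> S \<Longrightarrow> class_rep E x \<in> S"
  using class_rep_related[of S E x] equiv_type[of S E] by auto

lemma class_rep_idem: "equiv S E \<Longrightarrow> x \<in> S \<Longrightarrow> class_rep E (class_rep E x) = class_rep E x"
  by (rule class_rep_cong[OF _ class_rep_related, symmetric])

lemma fds_quotient:
  assumes "fds S f" "E \<in> fds_congruences S f"
  shows "fds (class_rep E ` S) (class_rep E \<circ> f)"
  using assms class_rep_in[of S E] unfolding fds_def fds_congruences_def by fastforce

lemma card_quotient_less:
  assumes "finite S" "equiv S E" "E \<noteq> Id_on S"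
  shows "card (class_rep E ` S) < card S"
proof -
  have "Id_on S \<subseteq> E" using assms(2) unfolding equiv_def refl_on_def by auto
  with assms(3) equiv_type[OF assms(2)] obtain x y where "(x, y) \<in> E" "x \<noteq> y" "x \<in> S" "y \<in> S"
    by auto
  then have "\<not> inj_on (class_rep E) S"
    using class_rep_cong[OF assms(2)] unfolding inj_on_def by blast
  then have "card (class_rep E ` S) \<noteq> card S" using inj_on_iff_eq_card[OF assms(1)] by blast
  with card_image_le[OF assms(1)] show ?thesis by (simp add: order_less_le)
qed

subsection \<open>Factorisation through the kernel\<close>

lemma equiv_kernel_on: "equiv S (kernel_on S h)"
  unfolding equiv_def refl_on_def sym_def trans_def kernel_on_def by auto

lemma kernel_on_eq_Id_on_iff: "kernel_on S h = Id_on S \<longleftrightarrow> inj_on h S"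
  unfolding kernel_on_def inj_on_def Id_on_def by auto

lemma kernel_in_fds_congruences:
  assumes "fds S f" "h \<in> fds_hom S f T g"
  shows "kernel_on S h \<in> fds_congruences S f"
  using assms equiv_kernel_on unfolding fds_congruences_def fds_def fds_hom_def kernel_on_def
  by auto

lemma fds_hom_restrict_quotient:
  assumes "fds S f" "h \<in> fds_hom S f T g" "E = kernel_on S h"
  shows "restrict h (class_rep E ` S) \<in> fds_inj_hom (class_rep E ` S) (class_rep E \<circ> f) T g"
proof -
  have E: "equiv S E" using assms(3) equiv_kernel_on by simp
  have h_rep: "h (class_rep E x) = h x" if "x \<in> S" for x
    using class_rep_related[OF E that] assms(3) by (simp add: kernel_on_def)
  have "inj_on h (class_rep E ` S)"
  proof (rule inj_onI)
    fix u v assume "u \<in> class_rep E ` S" "v \<in> class_rep E ` S" and huv: "h u = h v"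
    then obtain x y where x: "x \<in> S" "u = class_rep E x" and y: "y \<in> S" "v = class_rep E y"
      by blast
    have "(x, y) \<in> E" using huv h_rep[OF x(1)] h_rep[OF y(1)] x y assms(3)
      by (simp add: kernel_on_def)
    then show "u = v" using x y class_rep_cong[OF E] by simp
  qed
  moreover have "h (class_rep E (f x)) = g (h x)" if "x \<in> class_rep E ` S" for x
    using that assms(1,2) class_rep_in[OF E] h_rep by (auto simp: fds_def fds_hom_def)
  ultimately show ?thesis
    using assms(2) class_rep_in[OF E] by (auto simp: fds_inj_hom_def fds_hom_def)
qed

lemma fds_inj_hom_quotient_extend:
  assumes "fds S f" "E \<in> fds_congruences S f"
    and "h \<in> fds_inj_hom (class_rep E ` S) (class_rep E \<circ> f) T g"
  defines "h' \<equiv> restrict (h \<circ> class_rep E) S"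
  shows "h' \<in> fds_hom S f T g" and "kernel_on S h' = E"
proof -
  have E: "equiv S E" and cong: "\<And>x y. (x, y) \<in> E \<Longrightarrow> (f x, f y) \<in> E"
    using assms(2) unfolding fds_congruences_def by auto
  have fS: "f x \<in> S" if "x \<in> S" for x using assms(1) that unfolding fds_def by auto
  have "h' (f x) = g (h' x)" if x: "x \<in> S" for x
  proof -
    have "(class_rep E x, x) \<in> E" using class_rep_related[OF E x] E by (meson equiv_def symD)
    then have "class_rep E (f (class_rep E x)) = class_rep E (f x)"
      using cong class_rep_cong[OF E] by blast
    then show ?thesis
      using assms(3) x fS unfolding h'_def fds_inj_hom_def fds_hom_def by auto
  qed
  then show "h' \<in> fds_hom S f T g"
    using assms(3) class_rep_in[OF E] unfolding h'_def fds_inj_hom_def fds_hom_def by auto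
  have inj: "inj_on h (class_rep E ` S)" using assms(3) unfolding fds_inj_hom_def by simp
  have "(x, y) \<in> kernel_on S h' \<longleftrightarrow> (x, y) \<in> E" for x y
  proof (cases "x \<in> S \<and> y \<in> S")
    case True
    then have "(x, y) \<in> kernel_on S h' \<longleftrightarrow> class_rep E x = class_rep E y"
      using inj_on_eq_iff[OF inj] unfolding h'_def kernel_on_def by auto
    with True show ?thesis using class_rep_eq_iff[OF E] by blast
  qed (use equiv_type[OF E] in \<open>auto simp: kernel_on_def\<close>)
  then show "kernel_on S h' = E" by (simp add: set_eq_iff split_paired_all)
qed

lemma bij_betw_fds_hom_kernel_quotient:
  assumes "fds S f" "E \<in> fds_congruences S f"
  shows "bij_betw (\<lambda>h. restrict h (class_rep E ` S)) {h \<in> fds_hom S f T g. kernel_on S h = E}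
           (fds_inj_hom (class_rep E ` S) (class_rep E \<circ> f) T g)"
proof (rule bij_betw_byWitness[where f' = "\<lambda>h. restrict (h \<circ> class_rep E) S"])
  have E: "equiv S E" using assms(2) unfolding fds_congruences_def by auto
  show "\<forall>h\<in>{h \<in> fds_hom S f T g. kernel_on S h = E}.
      restrict (restrict h (class_rep E ` S) \<circ> class_rep E) S = h"
  proof (intro ballI ext)
    fix h x assume h: "h \<in> {h \<in> fds_hom S f T g. kernel_on S h = E}"
    show "restrict (restrict h (class_rep E ` S) \<circ> class_rep E) S x = h x"
      using h class_rep_related[OF E, of x]
      by (cases "x \<in> S") (auto simp: fds_hom_def kernel_on_def)
  qed
  show "\<forall>h\<in>fds_inj_hom (class_rep E ` S) (class_rep E \<circ> f) T g.
      restrict (restrict (h \<circ> class_rep E) S) (class_rep E ` S) = h"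
  proof (intro ballI ext)
    fix h x assume h: "h \<in> fds_inj_hom (class_rep E ` S) (class_rep E \<circ> f) T g"
    show "restrict (restrict (h \<circ> class_rep E) S) (class_rep E ` S) x = h x"
      using h class_rep_idem[OF E] class_rep_in[OF E]
      by (cases "x \<in> class_rep E ` S") (auto simp: fds_inj_hom_def fds_hom_def)
  qed
  show "(\<lambda>h. restrict h (class_rep E ` S)) ` {h \<in> fds_hom S f T g. kernel_on S h = E}
      \<subseteq> fds_inj_hom (class_rep E ` S) (class_rep E \<circ> f) T g"
    using fds_hom_restrict_quotient[OF assms(1) _ sym] by blast
  show "(\<lambda>h. restrict (h \<circ> class_rep E) S) ` fds_inj_hom (class_rep E ` S) (class_rep E \<circ> f) T g
      \<subseteq> {h \<in> fds_hom S f T g. kernel_on S h = E}"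
    using fds_inj_hom_quotient_extend[OF assms] by blast
qed

subsection \<open>Counting homomorphisms\<close>

lemma card_fds_hom_by_kernel:
  assumes "fds S f" "finite T"
  shows "card (fds_hom S f T g) = card (fds_inj_hom S f T g) +
    (\<Sum>E \<in> fds_congruences S f - {Id_on S}.
      card (fds_inj_hom (class_rep E ` S) (class_rep E \<circ> f) T g))"
proof -
  define F where "F E = {h \<in> fds_hom S f T g. kernel_on S h = E}" for E
  have "finite S" using assms(1) by (simp add: fds_def)
  then have fin: "finite (fds_congruences S f)" by (rule finite_fds_congruences)
  have "fds_hom S f T g = (\<Union>E \<in> fds_congruences S f. F E)"
    unfolding F_def using kernel_in_fds_congruences[OF assms(1)] by auto
  then have "card (fds_hom S f T g) = card (\<Union>E \<in> fds_congruences S f. F E)" by simp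
  also have "\<dots> = (\<Sum>E \<in> fds_congruences S f. card (F E))"
    by (rule card_UN_disjoint)
      (use fin finite_fds_hom[OF \<open>finite S\<close> assms(2)] in \<open>auto simp: F_def\<close>)
  also have "\<dots> = card (F (Id_on S)) + (\<Sum>E \<in> fds_congruences S f - {Id_on S}. card (F E))"
    by (rule sum.remove[OF fin Id_on_in_fds_congruences[OF assms(1)]])
  also have "card (F (Id_on S)) = card (fds_inj_hom S f T g)"
    unfolding F_def fds_inj_hom_def kernel_on_eq_Id_on_iff ..
  also have "(\<Sum>E \<in> fds_congruences S f - {Id_on S}. card (F E)) =
    (\<Sum>E \<in> fds_congruences S f - {Id_on S}.
      card (fds_inj_hom (class_rep E ` S) (class_rep E \<circ> f) T g))"
    unfolding F_def
  proof (rule sum.cong[OF refl])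
    fix E assume "E \<in> fds_congruences S f - {Id_on S}"
    then have "E \<in> fds_congruences S f" by simp
    then show "card {h \<in> fds_hom S f T g. kernel_on S h = E} =
        card (fds_inj_hom (class_rep E ` S) (class_rep E \<circ> f) T g)"
      by (rule bij_betw_same_card[OF bij_betw_fds_hom_kernel_quotient[OF assms(1)]])
  qed
  finally show ?thesis .
qed

lemma card_fds_inj_hom_eqI:
  fixes S :: "'a set"
  assumes hom_eq: "\<And>(X :: 'a set) fx. fds X fx \<Longrightarrow>
      card (fds_hom X fx T1 g1) = card (fds_hom X fx T2 g2)"
    and "finite T1" "finite T2" "fds S f"
  shows "card (fds_inj_hom S f T1 g1) = card (fds_inj_hom S f T2 g2)"
  using assms(4)
proof (induction "card S" arbitrary: S f rule: less_induct)
  case less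
  have "card (fds_inj_hom (class_rep E ` S) (class_rep E \<circ> f) T1 g1) =
      card (fds_inj_hom (class_rep E ` S) (class_rep E \<circ> f) T2 g2)"
    if E: "E \<in> fds_congruences S f - {Id_on S}" for E
  proof (rule less.hyps)
    show "card (class_rep E ` S) < card S"
      using E less.prems by (intro card_quotient_less) (auto simp: fds_def fds_congruences_def)
    show "fds (class_rep E ` S) (class_rep E \<circ> f)"
      using E less.prems by (intro fds_quotient) auto
  qed
  then have "(\<Sum>E \<in> fds_congruences S f - {Id_on S}.
        card (fds_inj_hom (class_rep E ` S) (class_rep E \<circ> f) T1 g1)) =
      (\<Sum>E \<in> fds_congruences S f - {Id_on S}.
        card (fds_inj_hom (class_rep E ` S) (class_rep E \<circ> f) T2 g2))"
    by (rule sum.cong[OF refl])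
  then show ?case
    using card_fds_hom_by_kernel[OF less.prems assms(2), of g1]
      card_fds_hom_by_kernel[OF less.prems assms(3), of g2] hom_eq[OF less.prems]
    by linarith
qed

lemma card_fds_hom_prod:
  assumes "\<And>x. x \<in> X \<Longrightarrow> fx x \<in> X"
  shows "card (fds_hom X fx (fds_prod_set S T) (fds_prod f g)) =
    card (fds_hom X fx S f) * card (fds_hom X fx T g)"
proof -
  have "bij_betw (\<lambda>(h1, h2). restrict (\<lambda>x. (h1 x, h2 x)) X) (fds_hom X fx S f \<times> fds_hom X fx T g)
      (fds_hom X fx (fds_prod_set S T) (fds_prod f g))"
  proof (rule bij_betw_byWitness[where f' = "\<lambda>h. (restrict (fst \<circ> h) X, restrict (snd \<circ> h) X)"])
    show "\<forall>a \<in> fds_hom X fx S f \<times> fds_hom X fx T g.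
        (\<lambda>h. (restrict (fst \<circ> h) X, restrict (snd \<circ> h) X)) ((\<lambda>(h1, h2). restrict (\<lambda>x. (h1 x, h2 x)) X) a) = a"
      by (auto simp: fds_hom_def PiE_iff extensional_def fun_eq_iff)
    show "\<forall>h \<in> fds_hom X fx (fds_prod_set S T) (fds_prod f g).
        (\<lambda>(h1, h2). restrict (\<lambda>x. (h1 x, h2 x)) X) ((\<lambda>h. (restrict (fst \<circ> h) X, restrict (snd \<circ> h) X)) h) = h"
      by (auto simp: fds_hom_def PiE_iff extensional_def fun_eq_iff)
    show "(\<lambda>(h1, h2). restrict (\<lambda>x. (h1 x, h2 x)) X) ` (fds_hom X fx S f \<times> fds_hom X fx T g)
        \<subseteq> fds_hom X fx (fds_prod_set S T) (fds_prod f g)"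
      using assms by (auto simp: fds_hom_def fds_prod_set_def fds_prod_def)
    show "(\<lambda>h. (restrict (fst \<circ> h) X, restrict (snd \<circ> h) X)) ` fds_hom X fx (fds_prod_set S T) (fds_prod f g)
        \<subseteq> fds_hom X fx S f \<times> fds_hom X fx T g"
    proof (rule image_subsetI)
      fix h assume "h \<in> fds_hom X fx (fds_prod_set S T) (fds_prod f g)"
      then have "fst (h x) \<in> S \<and> snd (h x) \<in> T \<and>
          fst (h (fx x)) = f (fst (h x)) \<and> snd (h (fx x)) = g (snd (h x))" if "x \<in> X" for x
        using that by (auto simp: fds_hom_def fds_prod_set_def fds_prod_def mem_Times_iff PiE_iff)
      then show "(restrict (fst \<circ> h) X, restrict (snd \<circ> h) X) \<in> fds_hom X fx S f \<times> fds_hom X fx T g"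
        using assms by (simp add: fds_hom_def)
    qed
  qed
  then have "card (fds_hom X fx S f \<times> fds_hom X fx T g) =
      card (fds_hom X fx (fds_prod_set S T) (fds_prod f g))"
    by (rule bij_betw_same_card)
  then show ?thesis by (simp add: card_cartesian_product)
qed

lemma fds_iso_sym:
  assumes "fds S f" "fds_iso S f T g"
  shows "fds_iso T g S f"
proof -
  obtain p where p: "bij_betw p S T" "\<And>x. x \<in> S \<Longrightarrow> p (f x) = g (p x)"
    using assms(2) unfolding fds_iso_def by blast
  have "the_inv_into S p (g y) = f (the_inv_into S p y)" if y: "y \<in> T" for y
  proof -
    obtain x where x: "x \<in> S" "y = p x" using p(1) y by (auto simp: bij_betw_def)
    have "f x \<in> S" using assms(1) x(1) by (simp add: fds_def)
    moreover have "g y = p (f x)" using p(2) x by simp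
    ultimately show ?thesis using x p(1) by (simp add: bij_betw_def the_inv_into_f_f)
  qed
  with bij_betw_the_inv_into[OF p(1)] show ?thesis unfolding fds_iso_def by blast
qed

lemma fds_hom_comp:
  assumes "k \<in> fds_hom X fx S f" "\<And>x. x \<in> X \<Longrightarrow> fx x \<in> X"
    and "p ` S \<subseteq> T" "\<And>x. x \<in> S \<Longrightarrow> p (f x) = g (p x)"
  shows "restrict (p \<circ> k) X \<in> fds_hom X fx T g"
  using assms by (auto simp: fds_hom_def PiE_iff image_subset_iff)

lemma card_fds_hom_le_if_fds_iso:
  assumes "fds_iso S f T g" "finite X" "finite T" "\<And>x. x \<in> X \<Longrightarrow> fx x \<in> X"
  shows "card (fds_hom X fx S f) \<le> card (fds_hom X fx T g)"
proof -
  obtain p where p: "bij_betw p S T" "\<And>x. x \<in> S \<Longrightarrow> p (f x) = g (p x)"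
    using assms(1) unfolding fds_iso_def by blast
  have "inj_on (\<lambda>k. restrict (p \<circ> k) X) (fds_hom X fx S f)"
  proof (rule inj_onI)
    fix k1 k2 assume k: "k1 \<in> fds_hom X fx S f" "k2 \<in> fds_hom X fx S f"
      and eq: "restrict (p \<circ> k1) X = restrict (p \<circ> k2) X"
    show "k1 = k2"
    proof (rule extensionalityI)
      fix x assume "x \<in> X"
      with k eq have "p (k1 x) = p (k2 x)" "k1 x \<in> S" "k2 x \<in> S"
        by (auto simp: fds_hom_def dest: fun_cong[of _ _ x])
      with p(1) show "k1 x = k2 x" by (auto simp: bij_betw_def dest: inj_onD)
    qed (use k in \<open>auto simp: fds_hom_def PiE_iff\<close>)
  qed
  moreover have "(\<lambda>k. restrict (p \<circ> k) X) ` fds_hom X fx S f \<subseteq> fds_hom X fx T g"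
  proof (rule image_subsetI)
    fix k assume "k \<in> fds_hom X fx S f"
    then show "restrict (p \<circ> k) X \<in> fds_hom X fx T g"
      by (rule fds_hom_comp[OF _ assms(4)]) (use p in \<open>auto simp: bij_betw_def\<close>)
  qed
  ultimately show ?thesis
    by (rule card_inj_on_le) (rule finite_fds_hom[OF assms(2,3)])
qed

lemma card_fds_hom_eq_if_fds_iso:
  assumes "fds S f" "fds T g" "fds X fx" "fds_iso S f T g"
  shows "card (fds_hom X fx S f) = card (fds_hom X fx T g)"
proof -
  have fin: "finite X" "finite S" "finite T" and closed: "\<And>x. x \<in> X \<Longrightarrow> fx x \<in> X"
    using assms(1-3) by (simp_all add: fds_def)
  show ?thesis
  proof (rule antisym)
    show "card (fds_hom X fx S f) \<le> card (fds_hom X fx T g)"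
      by (rule card_fds_hom_le_if_fds_iso[OF assms(4) fin(1,3) closed])
    show "card (fds_hom X fx T g) \<le> card (fds_hom X fx S f)"
      by (rule card_fds_hom_le_if_fds_iso[OF fds_iso_sym[OF assms(1,4)] fin(1,2) closed])
  qed
qed

lemma fds_hom_const:
  "s \<in> T \<Longrightarrow> g s = s \<Longrightarrow> (\<And>x. x \<in> X \<Longrightarrow> fx x \<in> X) \<Longrightarrow> restrict (\<lambda>_. s) X \<in> fds_hom X fx T g"
  by (auto simp: fds_hom_def)

lemma card_fds_hom_cancel:
  assumes "fds SA A" "fds SB B" "fds SC C" "s \<in> SA" "A s = s"
    and "fds_iso (fds_prod_set SA SB) (fds_prod A B) (fds_prod_set SA SC) (fds_prod A C)"
    and "fds X fx"
  shows "card (fds_hom X fx SB B) = card (fds_hom X fx SC C)"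
proof -
  have closed: "\<And>x. x \<in> X \<Longrightarrow> fx x \<in> X" and "finite X" "finite SA"
    using assms(1,7) by (simp_all add: fds_def)
  have "restrict (\<lambda>_. s) X \<in> fds_hom X fx SA A"
    using assms(4,5) closed by (rule fds_hom_const)
  with finite_fds_hom[OF \<open>finite X\<close> \<open>finite SA\<close>]
  have "card (fds_hom X fx SA A) \<noteq> 0" by auto
  moreover have "card (fds_hom X fx SA A) * card (fds_hom X fx SB B) =
      card (fds_hom X fx SA A) * card (fds_hom X fx SC C)"
    using card_fds_hom_eq_if_fds_iso[OF fds_fds_prod[OF assms(1,2)] fds_fds_prod[OF assms(1,3)] assms(7,6)]
    by (simp add: card_fds_hom_prod[OF closed])
  ultimately show ?thesis by simp
qed

lemma fds_inj_hom_id: "fds S f \<Longrightarrow> restrict id S \<in> fds_inj_hom S f S f"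
  by (auto simp: fds_inj_hom_def fds_hom_def fds_def)

lemma fds_inj_hom_nonempty:
  assumes "fds S f" "card (fds_inj_hom S f S f) = card (fds_inj_hom S f T g)"
  shows "fds_inj_hom S f T g \<noteq> {}"
proof
  assume "fds_inj_hom S f T g = {}"
  with assms(2) have "card (fds_inj_hom S f S f) = 0" by simp
  moreover have "finite (fds_inj_hom S f S f)"
    using assms(1) finite_fds_inj_hom by (auto simp: fds_def)
  ultimately show False using fds_inj_hom_id[OF assms(1)] by auto
qed

lemma fds_iso_if_inj_hom:
  assumes "h \<in> fds_inj_hom S f T g" "finite T" "card T \<le> card S"
  shows "fds_iso S f T g"
proof -
  have h: "inj_on h S" "h ` S \<subseteq> T" "\<forall>x\<in>S. h (f x) = g (h x)"
    using assms(1) by (auto simp: fds_inj_hom_def fds_hom_def)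
  have "card (h ` S) = card T"
    using card_image[OF h(1)] card_mono[OF assms(2) h(2)] assms(3) by simp
  then have "h ` S = T" using card_subset_eq[OF assms(2) h(2)] by simp
  with h show ?thesis unfolding fds_iso_def bij_betw_def by blast
qed

theorem mainTheorem12:
  fixes SA :: "'a set" and A :: "'a \<Rightarrow> 'a"
    and SB :: "'b set" and B :: "'b \<Rightarrow> 'b"
    and SC :: "'c set" and C :: "'c \<Rightarrow> 'c"
  assumes "dendron SA A" and "dendron SB B" and "dendron SC C"
    and "fds_iso (fds_prod_set SA SB) (fds_prod A B) (fds_prod_set SA SC) (fds_prod A C)"
  shows "fds_iso SB B SC C"
proof -
  have A: "fds SA A" and B: "fds SB B" and C: "fds SC C"
    using assms(1-3) unfolding dendron_def by auto
  obtain s where s: "s \<in> SA" "A s = s" using assms(1) unfolding dendron_def by auto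
  note hom_eq = card_fds_hom_cancel[OF A B C s assms(4)]
  have fin: "finite SB" "finite SC" using B C by (simp_all add: fds_def)
  obtain h where h: "h \<in> fds_inj_hom SB B SC C"
    using fds_inj_hom_nonempty[OF B card_fds_inj_hom_eqI[OF hom_eq fin B]] by blast
  obtain k where "k \<in> fds_inj_hom SC C SB B"
    using fds_inj_hom_nonempty[OF C card_fds_inj_hom_eqI[OF hom_eq fin C, symmetric]] by blast
  then have "card SC \<le> card SB"
    using fin by (auto simp: fds_inj_hom_def fds_hom_def intro: card_inj_on_le)
  with h fin(2) show ?thesis by (rule fds_iso_if_inj_hom)
qed

end
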